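(* Let $L\ge2$, $d\in\mathbb{N}_+$, and let $W_l(t)\in\mathbb{R}^{d\times d}$, $l\in[L]$, be gradient descent iterates for the loss $\ell=\frac12\|W_{L:1}X-Y\|_F^2$, where $X\in\mathbb{R}^{d\times N}$ satisfies $XX^\top=I_d$ and $Y\in\mathbb{R}^{d\times N}$, with update $$W_l(t)=(1-\eta\lambda)W_l(t-1)-\eta\,W_{L:l+1}^\top(t-1)\,\Gamma(t-1)\,W_{l-1:1}^\top(t-1),\quad \Gamma(t)=(W_{L:1}(t)X-Y)X^\top,$$ learning rate $\eta>0$, weight decay $\lambda\ge0$, and initialization $W_l^\top(0)W_l(0)=\varepsilon^2 I_d$ for all $l\in[L]$, $\varepsilon>0$. Let $\Phi=YX^\top$ have rank $r\in\mathbb{N}_+$ and suppose $m:=d-2r>0$. Then there exist orthonormal sets $\{u_i^{(l)}\}_{i=1}^m\subset\mathbb{R}^d$ and $\{v_i^{(l)}\}_{i=1}^m\subset\mathbb{R}^d$, $l\in[L]$, with $v_i^{(l+1)}=u_i^{(l)}$ for all $l\in[L-1]$ and $i\in[m]$, such that for all $t\ge0$, all $i\in[m]$ and all $l\in[L]$: (A) $W_l(t)v_i^{(l)}=\rho(t)u_i^{(l)}$; (B) $W_l^\top(t)u_i^{(l)}=\rho(t)v_i^{(l)}$; (C) $\Phi^\top W_{L:l+1}(t)u_i^{(l)}=0$; (D) $\Phi\,W_{l-1:1}^\top(t)v_i^{(l)}=0$, where $\rho(0)=\varepsilon$ and $\rho(t)=\rho(t-1)\big(1-\eta\lambda-\eta\,\rho(t-1)^{2(L-1)}\big)$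 for $t\ge1$.
   Context: $[L]=\{1,\dots,L\}$. $W_{j:i}=W_j\cdots W_i$ and $W_{j:i}^\top=W_i^\top\cdots W_j^\top$ for $j\ge i$; both are the identity if $j<i$. *)

theory Defs
  imports "HOL-Analysis.Analysis"
begin

text \<open>mprod A i j = A j ** A (j-1) ** ... ** A i  (= W_{j:i}); identity if j < i.\<close>
primrec mprod :: "(nat \<Rightarrow> real^'d^'d) \<Rightarrow> nat \<Rightarrow> nat \<Rightarrow> real^'d^'d" where
  "mprod A i 0 = (if i = 0 then A 0 else mat 1)"
| "mprod A i (Suc j) = (if Suc j < i then mat 1 else A (Suc j) ** mprod A i j)"

primrec rho :: "real \<Rightarrow> real \<Rightarrow> real \<Rightarrow> nat \<Rightarrow> nat \<Rightarrow> real" where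
  "rho eps eta lam L 0 = eps"
| "rho eps eta lam L (Suc t) =
     rho eps eta lam L t * (1 - eta * lam - eta * (rho eps eta lam L t) ^ (2 * (L - 1)))"

end

theory Submission
  imports Defs
begin

text \<open>
  At initialisation every layer is \<open>\<epsilon>\<close> times an orthogonal matrix, so pushing a unit vector
  \<open>e\<close> through the network, \<open>v\<^sub>1 = e\<close> and \<open>v\<^sub>l\<^sub>+\<^sub>1 = W\<^sub>l(0) v\<^sub>l / \<epsilon>\<close>, yields an orthonormal
  chain on which every layer acts as multiplication by \<open>\<epsilon>\<close>, forwards and backwards.
  If moreover \<open>\<Phi> e = 0\<close> and \<open>\<Phi>\<^sup>T W\<^sub>L\<^sub>:\<^sub>1(0) e = 0\<close> (conditions that leave a subspace of
  dimension at least \<open>d - 2r\<close> to choose \<open>e\<close> from), then the \<open>\<Phi>\<close>-part of the residual never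
  sees the chain, and the gradient of layer \<open>l\<close> acts on it as multiplication by \<open>\<rho>\<^bsup>2L-1\<^esup>\<close>.
  Hence every gradient step preserves the chain and rescales \<open>\<rho>\<close> by \<open>1 - \<eta>\<lambda> - \<eta>\<rho>\<^bsup>2(L-1)\<^esup>\<close>.
\<close>

declare transpose_matrix_vector [simp del]

lemma transpose_diff: "transpose (A - B) = transpose A - transpose (B :: 'a::ring^'n^'m)"
  by (simp add: transpose_def vec_eq_iff)

lemma inner_transpose_mult_vec: "(transpose A *v x) \<bullet> y = x \<bullet> (A *v (y :: real^'n))"
  by (simp add: dot_lmul_matrix transpose_matrix_vector)

lemma matrix_diff_mult: "(A - B) ** C = A ** C - B ** (C :: 'a::ring_1^'n^'m)"
  by (simp add: matrix_matrix_mult_def vec_eq_iff sum_subtractf algebra_simps)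

lemma residual_mult_transpose:
  fixes M :: "'a::comm_ring_1^'m^'k" and X :: "'a^'n^'m" and Y :: "'a^'n^'k"
  assumes "X ** transpose X = mat 1"
  shows "(M ** X - Y) ** transpose X = M - Y ** transpose X"
  using assms by (simp add: matrix_diff_mult matrix_mul_assoc[symmetric])

lemma mprod_empty: "1 \<le> k \<Longrightarrow> j < k \<Longrightarrow> mprod A k j = mat 1"
  by (cases j) auto

lemma inner_mprod_scaled_orthogonal:
  fixes A :: "nat \<Rightarrow> real^'d^'d"
  assumes orth: "\<And>l. l \<in> {1..L} \<Longrightarrow> transpose (A l) ** A l = (\<epsilon>\<^sup>2) *\<^sub>R mat 1"
    and "j \<le> L"
  shows "(mprod A 1 j *v x) \<bullet> (mprod A 1 j *v y) = \<epsilon> ^ (2 * j) * (x \<bullet> y)"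
  using \<open>j \<le> L\<close>
proof (induction j)
  case 0
  then show ?case by simp
next
  case (Suc j)
  let ?x = "mprod A 1 j *v x" and ?y = "mprod A 1 j *v y"
  have "(mprod A 1 (Suc j) *v x) \<bullet> (mprod A 1 (Suc j) *v y) = (A (Suc j) *v ?x) \<bullet> (A (Suc j) *v ?y)"
    by (simp add: matrix_vector_mul_assoc)
  also have "\<dots> = ?x \<bullet> ((transpose (A (Suc j)) ** A (Suc j)) *v ?y)"
    by (metis inner_transpose_mult_vec inner_commute matrix_vector_mul_assoc transpose_transpose)
  also have "\<dots> = \<epsilon>\<^sup>2 * (?x \<bullet> ?y)"
    using orth[of "Suc j"] Suc.prems by (simp add: scaleR_matrix_vector_assoc[symmetric])
  also have "\<dots> = \<epsilon> ^ (2 * Suc j) * (x \<bullet> y)"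
    using Suc by (simp add: power_add power2_eq_square)
  finally show ?case .
qed

lemma dim_matrix_kernel:
  fixes A :: "real^'n^'m"
  shows "dim {x. A *v x = 0} = CARD('n) - rank A"
proof -
  let ?R = "range (\<lambda>y. transpose A *v y)"
  have kernel_eq: "{x. A *v x = 0} = {x \<in> UNIV. \<forall>z \<in> ?R. orthogonal z x}"
    by (auto simp: orthogonal_def inner_transpose_mult_vec) (metis inner_eq_zero_iff)
  have "subspace ?R"
    by (simp add: linear_subspace_image matrix_vector_mul_linear)
  then have "dim {x \<in> UNIV. \<forall>z \<in> ?R. orthogonal z x} + dim ?R = dim (UNIV :: (real^'n) set)"
    by (rule dim_subspace_orthogonal_to_vectors) auto
  moreover have "dim ?R = rank A"
    by (simp add: rank_dim_range[symmetric] rank_transpose)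
  ultimately show ?thesis
    by (simp add: kernel_eq)
qed

lemma dim_Int_ge:
  fixes S T :: "'a::euclidean_space set"
  assumes "subspace S" "subspace T"
  shows "dim S + dim T \<le> DIM('a) + dim (S \<inter> T)"
  using dim_sums_Int[OF assms] dim_subset_UNIV[of "{x + y |x y. x \<in> S \<and> y \<in> T}"] by linarith

lemma dim_kernel_and_transpose_kernel_ge:
  fixes \<Phi> P :: "real^'n^'m"
  shows "CARD('n) - 2 * rank \<Phi> \<le> dim {x. \<Phi> *v x = 0 \<and> transpose \<Phi> *v (P *v x) = 0}"
proof -
  let ?K1 = "{x. \<Phi> *v x = 0}" and ?K2 = "{x. (transpose \<Phi> ** P) *v x = 0}"
  have "rank (transpose \<Phi> ** P) \<le> rank \<Phi>"
    using rank_mul_le_left[of "transpose \<Phi>" P] by (simp add: rank_transpose)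
  then have "CARD('n) - rank \<Phi> + (CARD('n) - rank \<Phi>) \<le> dim ?K1 + dim ?K2"
    by (simp add: dim_matrix_kernel)
  also have "\<dots> \<le> CARD('n) + dim (?K1 \<inter> ?K2)"
    using dim_Int_ge[of ?K1 ?K2]
    by (simp add: subspace_def matrix_vector_right_distrib matrix_vector_mult_scaleR)
  also have "?K1 \<inter> ?K2 = {x. \<Phi> *v x = 0 \<and> transpose \<Phi> *v (P *v x) = 0}"
    by (auto simp: matrix_vector_mul_assoc)
  finally show ?thesis
    by linarith
qed

lemma subspace_orthonormal_family:
  fixes S :: "'a::euclidean_space set"
  assumes "subspace S" and "m \<le> dim S"
  obtains e :: "nat \<Rightarrow> 'a"
  where "\<And>i j. i \<in> {1..m} \<Longrightarrow> j \<in> {1..m} \<Longrightarrow> e i \<bullet> e j = (if i = j then 1 else 0)"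
    and "\<And>i. i \<in> {1..m} \<Longrightarrow> e i \<in> S"
proof -
  obtain B where B: "B \<subseteq> S" "pairwise orthogonal B" "\<And>x. x \<in> B \<Longrightarrow> norm x = 1"
      "independent B" "card B = dim S"
    using orthonormal_basis_subspace[OF \<open>subspace S\<close>] by metis
  obtain g where g: "bij_betw g {1..card B} B"
    using ex_bij_betw_nat_finite_1 independent_imp_finite[OF B(4)] by blast
  then have g_inj: "inj_on g {1..m}" and g_in: "g ` {1..m} \<subseteq> B"
    using \<open>m \<le> dim S\<close> B(5) by (auto simp: bij_betw_def intro: inj_on_subset)
  show thesis
  proof
    fix i j assume i: "i \<in> {1..m}" and j: "j \<in> {1..m}"
    then have "g i \<in> B" "g j \<in> B"
      using g_in by auto
    moreover have "g i \<noteq> g j" if "i \<noteq> j"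
      using inj_onD[OF g_inj _ i j] that by blast
    ultimately show "g i \<bullet> g j = (if i = j then 1 else 0)"
      using B(2,3) by (auto simp: pairwise_def orthogonal_def norm_eq_1)
  next
    fix i assume "i \<in> {1..m}"
    then show "g i \<in> S"
      using g_in B(1) by blast
  qed
qed

text \<open>
  \<open>v l\<close> stands for the paper's \<open>v\<^sub>i\<^sup>(\<^sup>l\<^sup>)\<close> and \<open>v (Suc l)\<close> for \<open>u\<^sub>i\<^sup>(\<^sup>l\<^sup>) = v\<^sub>i\<^sup>(\<^sup>l\<^sup>+\<^sup>1\<^sup>)\<close>, so
  the linking condition \<open>v\<^sup>(\<^sup>l\<^sup>+\<^sup>1\<^sup>) = u\<^sup>(\<^sup>l\<^sup>)\<close> is built in.
\<close>
definition singular_chain :: "(nat \<Rightarrow> real^'d^'d) \<Rightarrow> (nat \<Rightarrow> real^'d) \<Rightarrow> real \<Rightarrow> nat \<Rightarrow> bool"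
  where "singular_chain A v \<rho> L \<longleftrightarrow>
    (\<forall>l\<in>{1..L}. A l *v v l = \<rho> *\<^sub>R v (Suc l) \<and> transpose (A l) *v v (Suc l) = \<rho> *\<^sub>R v l)"

lemma singular_chain_mprod:
  assumes chain: "singular_chain A v \<rho> L" and "1 \<le> k" "k \<le> Suc j" "j \<le> L"
  shows "mprod A k j *v v k = \<rho> ^ (Suc j - k) *\<^sub>R v (Suc j)"
  using assms(3,4)
proof (induction j)
  case 0
  then show ?case using \<open>1 \<le> k\<close> by simp
next
  case (Suc j)
  show ?case
  proof (cases "k = Suc (Suc j)")
    case True
    then show ?thesis by (simp add: mprod_empty)
  next
    case False
    then have "mprod A k (Suc j) *v v k = \<rho> ^ (Suc j - k) *\<^sub>R (A (Suc j) *v v (Suc j))"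
      using Suc by (simp add: matrix_vector_mul_assoc[symmetric] matrix_vector_mult_scaleR)
    also have "\<dots> = \<rho> ^ (Suc (Suc j) - k) *\<^sub>R v (Suc (Suc j))"
      using chain Suc.prems False by (simp add: singular_chain_def Suc_diff_le)
    finally show ?thesis .
  qed
qed

lemma singular_chain_mprod_transpose:
  assumes chain: "singular_chain A v \<rho> L" and "1 \<le> k" "k \<le> Suc j" "j \<le> L"
  shows "transpose (mprod A k j) *v v (Suc j) = \<rho> ^ (Suc j - k) *\<^sub>R v k"
  using assms(3,4)
proof (induction j)
  case 0
  then show ?case using \<open>1 \<le> k\<close> by simp
next
  case (Suc j)
  show ?case
  proof (cases "k = Suc (Suc j)")
    case True
    then show ?thesis by (simp add: mprod_empty)
  next
    case False
    then have "transpose (mprod A k (Suc j)) *v v (Suc (Suc j))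
        = transpose (mprod A k j) *v (transpose (A (Suc j)) *v v (Suc (Suc j)))"
      using Suc.prems by (simp add: matrix_transpose_mul matrix_vector_mul_assoc)
    also have "\<dots> = \<rho> ^ (Suc (Suc j) - k) *\<^sub>R v k"
      using chain Suc False
      by (simp add: singular_chain_def matrix_vector_mult_scaleR Suc_diff_le)
    finally show ?thesis .
  qed
qed

lemma singular_chain_gradient:
  fixes X Y :: "real^'n^'d"
  assumes chain: "singular_chain A v \<rho> L" and XX: "X ** transpose X = mat 1"
    and first: "(Y ** transpose X) *v v 1 = 0"
    and last: "transpose (Y ** transpose X) *v v (Suc L) = 0"
    and l: "l \<in> {1..L}"
  defines "G \<equiv> transpose (mprod A (l + 1) L) ** ((mprod A 1 L ** X - Y) ** transpose X)
      ** transpose (mprod A 1 (l - 1))"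
  shows "G *v v l = \<rho> ^ (2 * L - 1) *\<^sub>R v (Suc l)"
    and "transpose G *v v (Suc l) = \<rho> ^ (2 * L - 1) *\<^sub>R v l"
proof -
  let ?\<Phi> = "Y ** transpose X"
  have G: "G = transpose (mprod A (l + 1) L) ** (mprod A 1 L - ?\<Phi>) ** transpose (mprod A 1 (l - 1))"
    unfolding G_def residual_mult_transpose[OF XX] ..
  have head: "mprod A 1 (l - 1) *v v 1 = \<rho> ^ (l - 1) *\<^sub>R v l"
    and head_t: "transpose (mprod A 1 (l - 1)) *v v l = \<rho> ^ (l - 1) *\<^sub>R v 1"
    using singular_chain_mprod[OF chain, of 1 "l - 1"]
      singular_chain_mprod_transpose[OF chain, of 1 "l - 1"] l
    by auto
  have tail: "mprod A (l + 1) L *v v (Suc l) = \<rho> ^ (L - l) *\<^sub>R v (Suc L)"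
    and tail_t: "transpose (mprod A (l + 1) L) *v v (Suc L) = \<rho> ^ (L - l) *\<^sub>R v (Suc l)"
    using singular_chain_mprod[OF chain, of "Suc l" L]
      singular_chain_mprod_transpose[OF chain, of "Suc l" L] l
    by auto
  have full: "mprod A 1 L *v v 1 = \<rho> ^ L *\<^sub>R v (Suc L)"
    and full_t: "transpose (mprod A 1 L) *v v (Suc L) = \<rho> ^ L *\<^sub>R v 1"
    using singular_chain_mprod[OF chain, of 1 L] singular_chain_mprod_transpose[OF chain, of 1 L] by auto
  have exponent: "\<rho> ^ (l - 1) * (\<rho> ^ L * \<rho> ^ (L - l)) = \<rho> ^ (2 * L - 1)"
    using l by (simp add: power_add[symmetric] mult_2)
  have "G *v v l
      = transpose (mprod A (l + 1) L) *v ((mprod A 1 L - ?\<Phi>) *v (transpose (mprod A 1 (l - 1)) *v v l))"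
    by (simp add: G matrix_vector_mul_assoc matrix_mul_assoc)
  also have "\<dots> = (\<rho> ^ (l - 1) * \<rho> ^ L) *\<^sub>R (transpose (mprod A (l + 1) L) *v v (Suc L))"
    using head_t full first by (simp add: matrix_vector_mult_diff_rdistrib matrix_vector_mult_scaleR)
  also have "\<dots> = \<rho> ^ (2 * L - 1) *\<^sub>R v (Suc l)"
    using tail_t exponent by (simp add: matrix_vector_mult_scaleR mult.assoc)
  finally show "G *v v l = \<rho> ^ (2 * L - 1) *\<^sub>R v (Suc l)" .
  have "transpose G *v v (Suc l)
      = mprod A 1 (l - 1) *v ((transpose (mprod A 1 L) - transpose ?\<Phi>) *v (mprod A (l + 1) L *v v (Suc l)))"
    by (simp add: G matrix_transpose_mul transpose_diff matrix_vector_mul_assoc)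
  also have "\<dots> = (\<rho> ^ (L - l) * \<rho> ^ L) *\<^sub>R (mprod A 1 (l - 1) *v v 1)"
    using tail full_t last by (simp add: matrix_vector_mult_diff_rdistrib matrix_vector_mult_scaleR)
  also have "\<dots> = \<rho> ^ (2 * L - 1) *\<^sub>R v l"
    using head exponent by (simp add: matrix_vector_mult_scaleR mult_ac)
  finally show "transpose G *v v (Suc l) = \<rho> ^ (2 * L - 1) *\<^sub>R v l" .
qed

lemma singular_chain_gradient_step:
  fixes X Y :: "real^'n^'d"
  assumes chain: "singular_chain A v \<rho> L" and XX: "X ** transpose X = mat 1"
    and first: "(Y ** transpose X) *v v 1 = 0"
    and last: "transpose (Y ** transpose X) *v v (Suc L) = 0"
    and step: "\<And>l. l \<in> {1..L} \<Longrightarrow>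
      B l = (1 - eta * lam) *\<^sub>R A l
        - eta *\<^sub>R (transpose (mprod A (l + 1) L) ** ((mprod A 1 L ** X - Y) ** transpose X)
            ** transpose (mprod A 1 (l - 1)))"
  shows "singular_chain B v (\<rho> * (1 - eta * lam - eta * \<rho> ^ (2 * (L - 1)))) L"
  unfolding singular_chain_def
proof (intro ballI conjI)
  fix l assume l: "l \<in> {1..L}"
  define G where "G = transpose (mprod A (l + 1) L) ** ((mprod A 1 L ** X - Y) ** transpose X)
      ** transpose (mprod A 1 (l - 1))"
  have B: "B l = (1 - eta * lam) *\<^sub>R A l - eta *\<^sub>R G"
    using step[OF l] by (simp add: G_def)
  then have BT: "transpose (B l) = (1 - eta * lam) *\<^sub>R transpose (A l) - eta *\<^sub>R transpose G"
    by (simp add: transpose_diff transpose_scalar)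
  have exponent: "\<rho> ^ (2 * L - 1) = \<rho> * \<rho> ^ (2 * (L - 1))"
    using l by (cases L) auto
  have A: "A l *v v l = \<rho> *\<^sub>R v (Suc l)" "transpose (A l) *v v (Suc l) = \<rho> *\<^sub>R v l"
    using chain l by (auto simp: singular_chain_def)
  note G = singular_chain_gradient[OF chain XX first last l, folded G_def]
  show "B l *v v l = (\<rho> * (1 - eta * lam - eta * \<rho> ^ (2 * (L - 1)))) *\<^sub>R v (Suc l)"
    using A G exponent
    by (simp add: B matrix_vector_mult_diff_rdistrib scaleR_matrix_vector_assoc[symmetric] algebra_simps)
  show "transpose (B l) *v v (Suc l) = (\<rho> * (1 - eta * lam - eta * \<rho> ^ (2 * (L - 1)))) *\<^sub>R v l"
    using A G exponent
    by (simp add: BT matrix_vector_mult_diff_rdistrib scaleR_matrix_vector_assoc[symmetric] algebra_simps)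
qed

lemma singular_chain_scaled_orthogonal:
  fixes A :: "nat \<Rightarrow> real^'d^'d"
  assumes orth: "\<And>l. l \<in> {1..L} \<Longrightarrow> transpose (A l) ** A l = (\<epsilon>\<^sup>2) *\<^sub>R mat 1" and "\<epsilon> \<noteq> 0"
  shows "singular_chain A (\<lambda>l. (1 / \<epsilon> ^ (l - 1)) *\<^sub>R (mprod A 1 (l - 1) *v e)) \<epsilon> L"
  unfolding singular_chain_def
proof (intro ballI conjI)
  fix l assume l: "l \<in> {1..L}"
  then obtain k where k: "l = Suc k"
    by (cases l) auto
  show "A l *v ((1 / \<epsilon> ^ (l - 1)) *\<^sub>R (mprod A 1 (l - 1) *v e))
      = \<epsilon> *\<^sub>R ((1 / \<epsilon> ^ (Suc l - 1)) *\<^sub>R (mprod A 1 (Suc l - 1) *v e))"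
    using \<open>\<epsilon> \<noteq> 0\<close> by (simp add: k matrix_vector_mult_scaleR matrix_vector_mul_assoc)
  have "transpose (A l) *v (mprod A 1 l *v e) = \<epsilon>\<^sup>2 *\<^sub>R (mprod A 1 (l - 1) *v e)"
    using orth[OF l]
    by (simp add: k matrix_vector_mul_assoc matrix_mul_assoc scalar_matrix_assoc[symmetric]
        scaleR_matrix_vector_assoc[symmetric])
  then show "transpose (A l) *v ((1 / \<epsilon> ^ (Suc l - 1)) *\<^sub>R (mprod A 1 (Suc l - 1) *v e))
      = \<epsilon> *\<^sub>R ((1 / \<epsilon> ^ (l - 1)) *\<^sub>R (mprod A 1 (l - 1) *v e))"
    using \<open>\<epsilon> \<noteq> 0\<close> by (simp add: k matrix_vector_mult_scaleR power2_eq_square)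
qed

lemma initial_singular_chains:
  fixes A :: "nat \<Rightarrow> real^'d^'d" and \<Phi> :: "real^'d^'d"
  assumes orth: "\<And>l. l \<in> {1..L} \<Longrightarrow> transpose (A l) ** A l = (\<epsilon>\<^sup>2) *\<^sub>R mat 1" and "\<epsilon> \<noteq> 0"
    and m: "m \<le> CARD('d) - 2 * rank \<Phi>"
  obtains v :: "nat \<Rightarrow> nat \<Rightarrow> real^'d"
  where "\<And>i j l. i \<in> {1..m} \<Longrightarrow> j \<in> {1..m} \<Longrightarrow> l \<in> {1..Suc L} \<Longrightarrow>
      v i l \<bullet> v j l = (if i = j then 1 else 0)"
    and "\<And>i. i \<in> {1..m} \<Longrightarrow> singular_chain A (v i) \<epsilon> L"
    and "\<And>i. i \<in> {1..m} \<Longrightarrow> \<Phi> *v v i 1 = 0"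
    and "\<And>i. i \<in> {1..m} \<Longrightarrow> transpose \<Phi> *v v i (Suc L) = 0"
proof -
  let ?S = "{x. \<Phi> *v x = 0 \<and> transpose \<Phi> *v (mprod A 1 L *v x) = 0}"
  have S: "subspace ?S"
    by (simp add: subspace_def matrix_vector_right_distrib matrix_vector_mult_scaleR)
  have "m \<le> dim ?S"
    using m dim_kernel_and_transpose_kernel_ge[of \<Phi> "mprod A 1 L"] by linarith
  then obtain e
    where e_orth: "\<And>i j. i \<in> {1..m} \<Longrightarrow> j \<in> {1..m} \<Longrightarrow> e i \<bullet> e j = (if i = j then 1 else 0)"
      and e_S: "\<And>i. i \<in> {1..m} \<Longrightarrow> e i \<in> ?S"
    using subspace_orthonormal_family[OF S] by blast
  show thesis
  proof
    fix i j l assume i: "i \<in> {1..m}" and j: "j \<in> {1..m}" and l: "l \<in> {1..Suc L}"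
    have "(mprod A 1 (l - 1) *v e i) \<bullet> (mprod A 1 (l - 1) *v e j) = (\<epsilon> ^ (l - 1))\<^sup>2 * (e i \<bullet> e j)"
      using inner_mprod_scaled_orthogonal[where A = A and L = L, OF orth, of "l - 1"] l
      by (force simp: power_even_eq)
    then show "(1 / \<epsilon> ^ (l - 1)) *\<^sub>R (mprod A 1 (l - 1) *v e i) \<bullet> (1 / \<epsilon> ^ (l - 1)) *\<^sub>R (mprod A 1 (l - 1) *v e j)
        = (if i = j then 1 else 0)"
      using e_orth[OF i j] \<open>\<epsilon> \<noteq> 0\<close> by (simp add: power2_eq_square)
  next
    show "singular_chain A (\<lambda>l. (1 / \<epsilon> ^ (l - 1)) *\<^sub>R (mprod A 1 (l - 1) *v e i)) \<epsilon> L" for i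
      using orth \<open>\<epsilon> \<noteq> 0\<close> by (rule singular_chain_scaled_orthogonal)
  next
    show "\<Phi> *v ((1 / \<epsilon> ^ (1 - 1)) *\<^sub>R (mprod A 1 (1 - 1) *v e i)) = 0" if "i \<in> {1..m}" for i
      using e_S[OF that] by simp
    show "transpose \<Phi> *v ((1 / \<epsilon> ^ (Suc L - 1)) *\<^sub>R (mprod A 1 (Suc L - 1) *v e i)) = 0"
      if "i \<in> {1..m}" for i
      using e_S[OF that] by (simp add: matrix_vector_mult_scaleR)
  qed
qed

theorem lemma1:
  fixes W :: "nat \<Rightarrow> nat \<Rightarrow> real^'d^'d"
    and X Y :: "real^'n^'d"
    and L r :: nat and eta lam eps :: real
  assumes L: "L \<ge> 2"
    and XX: "X ** transpose X = mat 1"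
    and eta_pos: "eta > 0" and lam_nonneg: "lam \<ge> 0" and eps_pos: "eps > 0"
    and init: "\<And>l. l \<in> {1..L} \<Longrightarrow> transpose (W 0 l) ** W 0 l = (eps\<^sup>2) *\<^sub>R mat 1"
    and gd: "\<And>t l. t \<ge> 1 \<Longrightarrow> l \<in> {1..L} \<Longrightarrow>
        W t l = (1 - eta * lam) *\<^sub>R W (t - 1) l
          - eta *\<^sub>R (transpose (mprod (W (t - 1)) (l + 1) L)
               ** ((mprod (W (t - 1)) 1 L ** X - Y) ** transpose X)
               ** transpose (mprod (W (t - 1)) 1 (l - 1)))"
    and rank: "rank (Y ** transpose X) = r" and r: "r \<ge> 1"
    and m: "2 * r < CARD('d)"
  shows "\<exists>u v :: nat \<Rightarrow> nat \<Rightarrow> real^'d.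
      (\<forall>l\<in>{1..L}. \<forall>i\<in>{1..CARD('d) - 2 * r}. \<forall>j\<in>{1..CARD('d) - 2 * r}.
          u l i \<bullet> u l j = (if i = j then 1 else 0) \<and>
          v l i \<bullet> v l j = (if i = j then 1 else 0)) \<and>
      (\<forall>l\<in>{1..L - 1}. \<forall>i\<in>{1..CARD('d) - 2 * r}. v (l + 1) i = u l i) \<and>
      (\<forall>t. \<forall>i\<in>{1..CARD('d) - 2 * r}. \<forall>l\<in>{1..L}.
          W t l *v v l i = rho eps eta lam L t *\<^sub>R u l i \<and>
          transpose (W t l) *v u l i = rho eps eta lam L t *\<^sub>R v l i \<and>
          transpose (Y ** transpose X) *v (mprod (W t) (l + 1) L *v u l i) = 0 \<and>
          (Y ** transpose X) *v (transpose (mprod (W t) 1 (l - 1)) *v v l i) = 0)"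
proof -
  let ?\<Phi> = "Y ** transpose X" and ?I = "{1..CARD('d) - 2 * r}"
  obtain v where orth: "\<And>i j l. i \<in> ?I \<Longrightarrow> j \<in> ?I \<Longrightarrow> l \<in> {1..Suc L} \<Longrightarrow>
        v i l \<bullet> v j l = (if i = j then 1 else 0)"
      and chain0: "\<And>i. i \<in> ?I \<Longrightarrow> singular_chain (W 0) (v i) eps L"
      and first: "\<And>i. i \<in> ?I \<Longrightarrow> ?\<Phi> *v v i 1 = 0"
      and last: "\<And>i. i \<in> ?I \<Longrightarrow> transpose ?\<Phi> *v v i (Suc L) = 0"
    using initial_singular_chains[where A = "W 0" and L = L, OF init,
        where \<Phi> = ?\<Phi> and m = "CARD('d) - 2 * r"] eps_pos rank
    by auto
  have chain: "singular_chain (W t) (v i) (rho eps eta lam L t) L" if i: "i \<in> ?I" for i t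
  proof (induction t)
    case 0
    then show ?case using chain0[OF i] by simp
  next
    case (Suc t)
    then show ?case
      using singular_chain_gradient_step[OF Suc XX first[OF i] last[OF i]] gd[of "Suc t"] by simp
  qed
  show ?thesis
  proof (rule exI[of _ "\<lambda>l i. v i (Suc l)"], rule exI[of _ "\<lambda>l i. v i l"], intro conjI ballI allI)
    fix t i l assume i: "i \<in> ?I" and l: "l \<in> {1..L}"
    show "W t l *v v i l = rho eps eta lam L t *\<^sub>R v i (Suc l)"
      and "transpose (W t l) *v v i (Suc l) = rho eps eta lam L t *\<^sub>R v i l"
      using chain[OF i, of t] l by (auto simp: singular_chain_def)
    show "transpose ?\<Phi> *v (mprod (W t) (l + 1) L *v v i (Suc l)) = 0"
      using singular_chain_mprod[OF chain[OF i], of "Suc l" L] last[OF i] l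
      by (simp add: matrix_vector_mult_scaleR)
    show "?\<Phi> *v (transpose (mprod (W t) 1 (l - 1)) *v v i l) = 0"
      using singular_chain_mprod_transpose[OF chain[OF i], of 1 "l - 1"] first[OF i] l
      by (auto simp: matrix_vector_mult_scaleR)
  qed (use orth in auto)
qed

end
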